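(* For a solid weak BCC-algebra $(X,*,0)$ the following conditions are equivalent: (a) $X$ is branchwise commutative; (b) $x*y=x*(y*(y*x))$ for all $x,y$ belonging to the same branch; (c) $x=y*(y*x)$ for all $x,y\in X$ with $x\leqslant y$; (d) $x*(x*y)=y*(y*(x*(x*y)))$ for all $x,y$ belonging to the same branch.
   Context: A weak BCC-algebra is a set $X$ with a binary operation $*$ and a constant $0$ satisfying, for all $x,y,z\in X$: (i) $((x*y)*(z*y))*(x*z)=0$; (ii) $x*x=0$; (iii) $x*0=x$; (iv) $x*y=y*x=0$ implies $x=y$. The relation $x\leqslant y$ iff $x*y=0$ is a partial order on $X$. Let $I(X)$ be the set of minimal elements of $X$ with respect to $\leqslant$. For $a\in I(X)$ the branch initiated by $a$ is $B(a)=\{x\in X: a\leqslant x\}$; "belonging to the same branch" means lying in a common $B(a)$. A weak BCC-algebra is called (left) solid if $(x*y)*z=(x*z)*y$ holds for all $x,y$ belonging to the same branch and all $z\in X$. It is called branchwise commutative if $x*(x*y)=y*(y*x)$ holds for all $x,y$ belonging to the same branch. *)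

theory Defs
  imports Main
begin

definition weak_BCC :: "'a set \<Rightarrow> ('a \<Rightarrow> 'a \<Rightarrow> 'a) \<Rightarrow> 'a \<Rightarrow> bool" where
  "weak_BCC X m e \<longleftrightarrow>
     e \<in> X \<and> (\<forall>x\<in>X. \<forall>y\<in>X. m x y \<in> X) \<and>
     (\<forall>x\<in>X. \<forall>y\<in>X. \<forall>z\<in>X. m (m (m x y) (m z y)) (m x z) = e) \<and>
     (\<forall>x\<in>X. m x x = e) \<and>
     (\<forall>x\<in>X. m x e = x) \<and>
     (\<forall>x\<in>X. \<forall>y\<in>X. m x y = e \<and> m y x = e \<longrightarrow> x = y)"

definition bcc_le :: "('a \<Rightarrow> 'a \<Rightarrow> 'a) \<Rightarrow> 'a \<Rightarrow> 'a \<Rightarrow> 'a \<Rightarrow> bool" where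
  "bcc_le m e x y \<longleftrightarrow> m x y = e"

definition minimal_elems :: "'a set \<Rightarrow> ('a \<Rightarrow> 'a \<Rightarrow> 'a) \<Rightarrow> 'a \<Rightarrow> 'a set" where
  "minimal_elems X m e = {a \<in> X. \<forall>x\<in>X. bcc_le m e x a \<longrightarrow> x = a}"

definition branch :: "'a set \<Rightarrow> ('a \<Rightarrow> 'a \<Rightarrow> 'a) \<Rightarrow> 'a \<Rightarrow> 'a \<Rightarrow> 'a set" where
  "branch X m e a = {x \<in> X. bcc_le m e a x}"

definition same_branch :: "'a set \<Rightarrow> ('a \<Rightarrow> 'a \<Rightarrow> 'a) \<Rightarrow> 'a \<Rightarrow> 'a \<Rightarrow> 'a \<Rightarrow> bool" where
  "same_branch X m e x y \<longleftrightarrow>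
     (\<exists>a\<in>minimal_elems X m e. x \<in> branch X m e a \<and> y \<in> branch X m e a)"

definition solid :: "'a set \<Rightarrow> ('a \<Rightarrow> 'a \<Rightarrow> 'a) \<Rightarrow> 'a \<Rightarrow> bool" where
  "solid X m e \<longleftrightarrow>
     (\<forall>x\<in>X. \<forall>y\<in>X. \<forall>z\<in>X. same_branch X m e x y \<longrightarrow> m (m x y) z = m (m x z) y)"

definition branchwise_commutative :: "'a set \<Rightarrow> ('a \<Rightarrow> 'a \<Rightarrow> 'a) \<Rightarrow> 'a \<Rightarrow> bool" where
  "branchwise_commutative X m e \<longleftrightarrow>
     (\<forall>x\<in>X. \<forall>y\<in>X. same_branch X m e x y \<longrightarrow> m x (m x y) = m y (m y x))"

end

theory Submission imports Defs begin

text \<open>Two elements lie in a common branch iff \<open>0 \<star> x = 0 \<star> y\<close>, the branch of \<open>x\<close> being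
  initiated by \<open>0 \<star> (0 \<star> x)\<close>. On a branch, solidity makes \<open>x \<star> (x \<star> y)\<close> a lower bound of
  \<open>x\<close> and \<open>y\<close> with \<open>x \<star> (x \<star> (x \<star> y)) = x \<star> y\<close>; all four conditions then say that this
  lower bound is symmetric in \<open>x\<close> and \<open>y\<close>, and the equivalences follow by antisymmetry.\<close>

locale weak_bcc =
  fixes X :: "'a set" and m :: "'a \<Rightarrow> 'a \<Rightarrow> 'a" (infixl "\<star>" 70) and zero :: 'a ("\<zero>")
  assumes zero_closed: "\<zero> \<in> X"
    and mult_closed: "\<And>x y. x \<in> X \<Longrightarrow> y \<in> X \<Longrightarrow> x \<star> y \<in> X"
    and bcc_axiom: "\<And>x y z. x \<in> X \<Longrightarrow> y \<in> X \<Longrightarrow> z \<in> X \<Longrightarrow> ((x \<star> y) \<star> (z \<star> y)) \<star> (x \<star> z) = \<zero>"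
    and mult_self: "\<And>x. x \<in> X \<Longrightarrow> x \<star> x = \<zero>"
    and mult_zero_right: "\<And>x. x \<in> X \<Longrightarrow> x \<star> \<zero> = x"
    and le_antisym: "\<And>x y. x \<in> X \<Longrightarrow> y \<in> X \<Longrightarrow> x \<star> y = \<zero> \<Longrightarrow> y \<star> x = \<zero> \<Longrightarrow> x = y"
begin

abbreviation le :: "'a \<Rightarrow> 'a \<Rightarrow> bool" (infix "\<preceq>" 50) where
  "x \<preceq> y \<equiv> x \<star> y = \<zero>"

abbreviation meet :: "'a \<Rightarrow> 'a \<Rightarrow> 'a" where
  "meet x y \<equiv> x \<star> (x \<star> y)"

lemma mult_left_antimono: "x \<in> X \<Longrightarrow> y \<in> X \<Longrightarrow> z \<in> X \<Longrightarrow> x \<preceq> y \<Longrightarrow> z \<star> y \<preceq> z \<star> x"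
  using bcc_axiom[of z y x] mult_zero_right mult_closed by simp

lemma zero_mult_swap_le: "x \<in> X \<Longrightarrow> y \<in> X \<Longrightarrow> \<zero> \<star> (y \<star> x) \<preceq> x \<star> y"
  using bcc_axiom[of x x y] mult_self by simp

lemma mult_mult_zero_mult_le: "x \<in> X \<Longrightarrow> y \<in> X \<Longrightarrow> (x \<star> y) \<star> (\<zero> \<star> y) \<preceq> x"
  using bcc_axiom[of x y \<zero>] mult_zero_right zero_closed by simp

lemma zero_mult_zero_mult_swap: "x \<in> X \<Longrightarrow> y \<in> X \<Longrightarrow> \<zero> \<star> (\<zero> \<star> (x \<star> y)) = \<zero> \<star> (y \<star> x)"
proof (rule le_antisym)
  assume x: "x \<in> X" and y: "y \<in> X"
  show "\<zero> \<star> (\<zero> \<star> (x \<star> y)) \<in> X" "\<zero> \<star> (y \<star> x) \<in> X"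
    using x y mult_closed zero_closed by simp_all
  show "\<zero> \<star> (\<zero> \<star> (x \<star> y)) \<preceq> \<zero> \<star> (y \<star> x)"
    using mult_mult_zero_mult_le[of "\<zero> \<star> (y \<star> x)" "x \<star> y"] zero_mult_swap_le[OF x y]
      x y mult_closed zero_closed by simp
  show "\<zero> \<star> (y \<star> x) \<preceq> \<zero> \<star> (\<zero> \<star> (x \<star> y))"
    using mult_left_antimono[of "\<zero> \<star> (x \<star> y)" "y \<star> x" \<zero>] zero_mult_swap_le[OF y x]
      x y mult_closed zero_closed by simp
qed

lemma zero_mult_zero_mult_le: "x \<in> X \<Longrightarrow> \<zero> \<star> (\<zero> \<star> x) \<preceq> x"
  using zero_mult_swap_le[of x \<zero>] zero_closed mult_zero_right by simp

lemma zero_mult_zero_mult_zero_mult: "x \<in> X \<Longrightarrow> \<zero> \<star> (\<zero> \<star> (\<zero> \<star> x)) = \<zero> \<star> x"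
  using zero_mult_zero_mult_swap[of \<zero> x] zero_closed mult_zero_right mult_self by simp

lemma zero_mult_eq_if_le: "x \<in> X \<Longrightarrow> y \<in> X \<Longrightarrow> x \<preceq> y \<Longrightarrow> \<zero> \<star> x = \<zero> \<star> y"
proof (rule le_antisym)
  assume x: "x \<in> X" and y: "y \<in> X" and xy: "x \<preceq> y"
  show "\<zero> \<star> x \<in> X" "\<zero> \<star> y \<in> X" using x y mult_closed zero_closed by simp_all
  have "\<zero> \<star> (\<zero> \<star> y) \<preceq> x" using mult_mult_zero_mult_le[OF x y] xy by simp
  then show "\<zero> \<star> x \<preceq> \<zero> \<star> y"
    using mult_left_antimono[of "\<zero> \<star> (\<zero> \<star> y)" x \<zero>] zero_mult_zero_mult_zero_mult[OF y]
      x y mult_closed zero_closed by simp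
  show "\<zero> \<star> y \<preceq> \<zero> \<star> x" using mult_left_antimono[OF x y zero_closed xy] .
qed

lemma zero_mult_zero_mult_minimal: "x \<in> X \<Longrightarrow> \<zero> \<star> (\<zero> \<star> x) \<in> minimal_elems X (\<star>) \<zero>"
  unfolding minimal_elems_def bcc_le_def
proof (intro CollectI conjI ballI impI)
  assume x: "x \<in> X"
  then show a: "\<zero> \<star> (\<zero> \<star> x) \<in> X" using mult_closed zero_closed by simp
  fix w assume w: "w \<in> X" and wa: "w \<preceq> \<zero> \<star> (\<zero> \<star> x)"
  have "\<zero> \<star> w = \<zero> \<star> x"
    using zero_mult_eq_if_le[OF w a wa] zero_mult_zero_mult_zero_mult[OF x] by simp
  then have "\<zero> \<star> (\<zero> \<star> x) \<preceq> w" using zero_mult_zero_mult_le[OF w] by simp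
  then show "w = \<zero> \<star> (\<zero> \<star> x)" using le_antisym[OF w a wa] by simp
qed

lemma same_branch_iff:
  assumes x: "x \<in> X" and y: "y \<in> X"
  shows "same_branch X (\<star>) \<zero> x y \<longleftrightarrow> \<zero> \<star> x = \<zero> \<star> y"
proof
  assume "same_branch X (\<star>) \<zero> x y"
  then obtain a where a: "a \<in> X" "a \<preceq> x" "a \<preceq> y"
    unfolding same_branch_def minimal_elems_def branch_def bcc_le_def by blast
  show "\<zero> \<star> x = \<zero> \<star> y"
    using zero_mult_eq_if_le[OF a(1) x a(2)] zero_mult_eq_if_le[OF a(1) y a(3)] by simp
next
  assume "\<zero> \<star> x = \<zero> \<star> y"
  then have "\<zero> \<star> (\<zero> \<star> x) \<preceq> y" using zero_mult_zero_mult_le[OF y] by simp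
  then show "same_branch X (\<star>) \<zero> x y"
    unfolding same_branch_def branch_def bcc_le_def
    using zero_mult_zero_mult_minimal[OF x] zero_mult_zero_mult_le[OF x] x y by blast
qed

end

locale solid_weak_bcc = weak_bcc +
  assumes solid_branch: "\<And>x y z. x \<in> X \<Longrightarrow> y \<in> X \<Longrightarrow> z \<in> X \<Longrightarrow> \<zero> \<star> x = \<zero> \<star> y \<Longrightarrow>
    (x \<star> y) \<star> z = (x \<star> z) \<star> y"
begin

lemma meet_le_right: "x \<in> X \<Longrightarrow> y \<in> X \<Longrightarrow> \<zero> \<star> x = \<zero> \<star> y \<Longrightarrow> meet x y \<preceq> y"
  using solid_branch[of x y "x \<star> y"] mult_self mult_closed by simp

lemma zero_mult_mult_same_branch: "x \<in> X \<Longrightarrow> y \<in> X \<Longrightarrow> \<zero> \<star> x = \<zero> \<star> y \<Longrightarrow> \<zero> \<star> (x \<star> y) = \<zero>"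
  by (metis bcc_axiom mult_closed mult_self solid_branch)

lemma meet_le_left: "x \<in> X \<Longrightarrow> y \<in> X \<Longrightarrow> \<zero> \<star> x = \<zero> \<star> y \<Longrightarrow> meet x y \<preceq> x"
  using mult_left_antimono[of \<zero> "x \<star> y" x] zero_mult_mult_same_branch
    mult_closed zero_closed mult_zero_right by simp

lemma meet_same_branch: "x \<in> X \<Longrightarrow> y \<in> X \<Longrightarrow> \<zero> \<star> x = \<zero> \<star> y \<Longrightarrow> \<zero> \<star> meet x y = \<zero> \<star> x"
  using zero_mult_eq_if_le meet_le_left mult_closed by metis

lemma mult_meet: "x \<in> X \<Longrightarrow> y \<in> X \<Longrightarrow> \<zero> \<star> x = \<zero> \<star> y \<Longrightarrow> x \<star> meet x y = x \<star> y"
proof (rule le_antisym)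
  assume x: "x \<in> X" and y: "y \<in> X" and h: "\<zero> \<star> x = \<zero> \<star> y"
  then have u: "meet x y \<in> X" using mult_closed by simp
  show "x \<star> meet x y \<in> X" "x \<star> y \<in> X" using mult_closed x y u by auto
  show "x \<star> y \<preceq> x \<star> meet x y"
    using mult_left_antimono[OF u y x] meet_le_right[OF x y h] by simp
  have "(x \<star> meet x y) \<star> (x \<star> y) = meet x y \<star> meet x y"
    using solid_branch[of x "meet x y" "x \<star> y"] meet_same_branch[OF x y h] x y u mult_closed by simp
  then show "x \<star> meet x y \<preceq> x \<star> y" using mult_self[OF u] by simp
qed

text \<open>Conditions (a)--(d) of the theorem, with \<open>meet x y = x \<star> (x \<star> y)\<close> and with
  \<open>same_branch\<close> rewritten as \<open>\<zero> \<star> x = \<zero> \<star> y\<close>.\<close>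

lemma meet_commute_iff_mult_meet:
  "(\<forall>x\<in>X. \<forall>y\<in>X. \<zero> \<star> x = \<zero> \<star> y \<longrightarrow> meet x y = meet y x)
     \<longleftrightarrow> (\<forall>x\<in>X. \<forall>y\<in>X. \<zero> \<star> x = \<zero> \<star> y \<longrightarrow> x \<star> y = x \<star> meet y x)"
proof (intro iffI ballI impI)
  fix x y assume "\<forall>x\<in>X. \<forall>y\<in>X. \<zero> \<star> x = \<zero> \<star> y \<longrightarrow> meet x y = meet y x"
    and "x \<in> X" "y \<in> X" "\<zero> \<star> x = \<zero> \<star> y"
  then show "x \<star> y = x \<star> meet y x" using mult_meet by metis
next
  assume mult_meet_eq: "\<forall>x\<in>X. \<forall>y\<in>X. \<zero> \<star> x = \<zero> \<star> y \<longrightarrow> x \<star> y = x \<star> meet y x"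
  have meet_le: "meet x y \<preceq> meet y x" if x: "x \<in> X" and y: "y \<in> X" and h: "\<zero> \<star> x = \<zero> \<star> y" for x y
  proof -
    have q: "meet y x \<in> X" using mult_closed x y by simp
    have hq: "\<zero> \<star> meet y x = \<zero> \<star> x" using meet_same_branch[of y x] x y h by simp
    have "x \<star> y = x \<star> meet y x" using mult_meet_eq x y h by blast
    then show ?thesis using meet_le_right[OF x q hq[symmetric]] by simp
  qed
  fix x y assume "x \<in> X" "y \<in> X" "\<zero> \<star> x = \<zero> \<star> y"
  then show "meet x y = meet y x" using meet_le[of x y] meet_le[of y x] le_antisym mult_closed by metis
qed

lemma mult_meet_iff_meet_of_le:
  "(\<forall>x\<in>X. \<forall>y\<in>X. \<zero> \<star> x = \<zero> \<star> y \<longrightarrow> x \<star> y = x \<star> meet y x)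
     \<longleftrightarrow> (\<forall>x\<in>X. \<forall>y\<in>X. x \<preceq> y \<longrightarrow> x = meet y x)"
proof (intro iffI ballI impI)
  fix x y assume mult_meet_eq: "\<forall>x\<in>X. \<forall>y\<in>X. \<zero> \<star> x = \<zero> \<star> y \<longrightarrow> x \<star> y = x \<star> meet y x"
    and x: "x \<in> X" and y: "y \<in> X" and xy: "x \<preceq> y"
  have h: "\<zero> \<star> x = \<zero> \<star> y" using zero_mult_eq_if_le[OF x y xy] .
  have "x \<preceq> meet y x" using mult_meet_eq x y h xy by metis
  moreover have "meet y x \<preceq> x" using meet_le_right[OF y x] h by simp
  ultimately show "x = meet y x" using le_antisym mult_closed x y by metis
next
  fix x y assume meet_of_le: "\<forall>x\<in>X. \<forall>y\<in>X. x \<preceq> y \<longrightarrow> x = meet y x"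
    and x: "x \<in> X" and y: "y \<in> X" and h: "\<zero> \<star> x = \<zero> \<star> y"
  have q: "meet y x \<in> X" and p: "meet x y \<in> X" using mult_closed x y by auto
  have hq: "\<zero> \<star> meet y x = \<zero> \<star> x" using meet_same_branch[of y x] x y h by simp
  have "x \<star> y \<preceq> x \<star> meet y x"
    using mult_left_antimono[OF q y x] meet_le_left[of y x] x y h by simp
  moreover have "x \<star> meet y x \<preceq> x \<star> y"
  proof -
    text \<open>By (c), \<open>meet x y \<preceq> y\<close> gives \<open>meet x y = meet y (meet x y)\<close>, and \<open>meet y\<close> is
      monotone, so \<open>meet x y \<preceq> x\<close> yields \<open>meet x y \<preceq> meet y x\<close>.\<close>
    have "y \<star> x \<preceq> y \<star> meet x y" using mult_left_antimono[OF p x y] meet_le_left[OF x y h] by simp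
    then have "meet y (meet x y) \<preceq> meet y x"
      using mult_left_antimono[of "y \<star> x" "y \<star> meet x y" y] mult_closed x y p by simp
    then have "meet x y \<preceq> meet y x"
      using meet_of_le p y meet_le_right[OF x y h] by metis
    moreover have "(x \<star> meet y x) \<star> (x \<star> y) = meet x y \<star> meet y x"
      using solid_branch[of x "meet y x" "x \<star> y"] hq x q y mult_closed by simp
    ultimately show ?thesis by simp
  qed
  ultimately show "x \<star> y = x \<star> meet y x" using le_antisym mult_closed x y q by metis
qed

lemma meet_of_le_iff_meet_absorb:
  "(\<forall>x\<in>X. \<forall>y\<in>X. x \<preceq> y \<longrightarrow> x = meet y x)
     \<longleftrightarrow> (\<forall>x\<in>X. \<forall>y\<in>X. \<zero> \<star> x = \<zero> \<star> y \<longrightarrow> meet x y = meet y (meet x y))"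
proof (intro iffI ballI impI)
  fix x y assume "\<forall>x\<in>X. \<forall>y\<in>X. x \<preceq> y \<longrightarrow> x = meet y x"
    and "x \<in> X" "y \<in> X" "\<zero> \<star> x = \<zero> \<star> y"
  then show "meet x y = meet y (meet x y)" using meet_le_right mult_closed by metis
next
  fix x y assume "\<forall>x\<in>X. \<forall>y\<in>X. \<zero> \<star> x = \<zero> \<star> y \<longrightarrow> meet x y = meet y (meet x y)"
    and x: "x \<in> X" and y: "y \<in> X" and xy: "x \<preceq> y"
  then have "meet x y = meet y (meet x y)" using zero_mult_eq_if_le by metis
  then show "x = meet y x" using xy mult_zero_right x by simp
qed

end

theorem theorem3p6:
  fixes X :: "'a set" and m :: "'a \<Rightarrow> 'a \<Rightarrow> 'a" and e :: 'a
  assumes "weak_BCC X m e" and "solid X m e"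
  shows "(branchwise_commutative X m e
            \<longleftrightarrow> (\<forall>x\<in>X. \<forall>y\<in>X. same_branch X m e x y \<longrightarrow> m x y = m x (m y (m y x))))
       \<and> ((\<forall>x\<in>X. \<forall>y\<in>X. same_branch X m e x y \<longrightarrow> m x y = m x (m y (m y x)))
            \<longleftrightarrow> (\<forall>x\<in>X. \<forall>y\<in>X. bcc_le m e x y \<longrightarrow> x = m y (m y x)))
       \<and> ((\<forall>x\<in>X. \<forall>y\<in>X. bcc_le m e x y \<longrightarrow> x = m y (m y x))
            \<longleftrightarrow> (\<forall>x\<in>X. \<forall>y\<in>X. same_branch X m e x y \<longrightarrow> m x (m x y) = m y (m y (m x (m x y)))))"
proof -
  interpret weak_bcc X m e
    using assms(1) unfolding weak_BCC_def by unfold_locales blast+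
  interpret solid_weak_bcc X m e
    using assms(2) same_branch_iff unfolding solid_def by unfold_locales blast
  have same_branch: "\<And>P. (\<forall>x\<in>X. \<forall>y\<in>X. same_branch X m e x y \<longrightarrow> P x y)
      \<longleftrightarrow> (\<forall>x\<in>X. \<forall>y\<in>X. m e x = m e y \<longrightarrow> P x y)"
    using same_branch_iff by auto
  show ?thesis
    unfolding branchwise_commutative_def same_branch bcc_le_def
    using meet_commute_iff_mult_meet mult_meet_iff_meet_of_le meet_of_le_iff_meet_absorb by blast
qed

end
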